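(* Let $r\in\mathbb Z_n$ and $1\le j\le\frac{n-1}2$, write $\mathcal U_k=\mathcal U_k(q^j+q^{-j})$, and let $\mathbf v=[1\ q^{2r}\ \cdots\ q^{2(n-1)r}]^T$. Put $\mathbf x_0=\mathbf v$ and for $1\le k\le n-1$ $$\mathbf x_k=q^{kr}\mathcal U_k\mathbf v+q^{(k-1)r}\sum_{s=0}^{\lfloor (k-1)/2\rfloor}(k-2s)\,\mathcal U_{k-1-2s}\mathbf v.$$ Then $\mathbf x_{j,r}=[\mathbf x_0;\dots;\mathbf x_{n-1}]$ satisfies $M\mathbf x_{j,r}=\lambda_{j,r}\mathbf x_{j,r}+\mathbf v_{j,r}$, where $\lambda_{j,r}=q^r(q^j+q^{-j})$ and $\mathbf v_{j,r}=[\mathbf v;\,q^r\mathcal U_1\mathbf v;\,\dots;\,q^{(n-1)r}\mathcal U_{n-1}\mathbf v]$ is a (nonzero) right eigenvector of $M$ with eigenvalue $\lambda_{j,r}$.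
   Context: $n\ge3$ odd, $q$ a primitive $n$-th root of unity in $\mathbb C$. $I$ is the $n\times n$ identity, $Z$ the $n\times n$ cyclic permutation matrix with $(Zu)_i=u_{i+1}$ (indices mod $n$). $M$ is the $n^2\times n^2$ block matrix of $n\times n$ blocks $M_{ab}$ ($0\le a,b\le n-1$) with $M_{a,a+1}=I$ ($0\le a\le n-2$), $M_{a,a-1}=Z$ ($1\le a\le n-2$), $M_{n-1,0}=2I$, $M_{n-1,n-2}=2Z$, other blocks zero (the McKay matrix of the $D_n$-module $V(2,0)$). $\mathcal U_k(t)$: $\mathcal U_0=1$, $\mathcal U_1=t$, $\mathcal U_k=t\mathcal U_{k-1}-\mathcal U_{k-2}$. Vectors in $\mathbb C^{n^2}$ are written as stacks of $n$ blocks of length $n$. *)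

theory Defs
  imports Complex_Main "Jordan_Normal_Form.Char_Poly"
begin

definition prim_root_unity :: "nat \<Rightarrow> complex \<Rightarrow> bool" where
  "prim_root_unity n q \<longleftrightarrow> q ^ n = 1 \<and> (\<forall>k. 0 < k \<and> k < n \<longrightarrow> q ^ k \<noteq> 1)"

fun chebU :: "nat \<Rightarrow> complex \<Rightarrow> complex" where
  "chebU 0 t = 1"
| "chebU (Suc 0) t = t"
| "chebU (Suc (Suc k)) t = t * chebU (Suc k) t - chebU k t"

definition idE :: "nat \<Rightarrow> nat \<Rightarrow> complex" where
  "idE i k = (if i = k then 1 else 0)"

definition cycZ :: "nat \<Rightarrow> nat \<Rightarrow> nat \<Rightarrow> complex" where
  "cycZ n i k = (if k = (i + 1) mod n then 1 else 0)"

text \<open>Entry (i,k) of block M_(a,b) of the McKay matrix.\<close>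
definition mckay_block :: "nat \<Rightarrow> nat \<Rightarrow> nat \<Rightarrow> nat \<Rightarrow> nat \<Rightarrow> complex" where
  "mckay_block n a b i k =
     (if a \<le> n - 2 \<and> b = a + 1 then idE i k
      else if 1 \<le> a \<and> a \<le> n - 2 \<and> b + 1 = a then cycZ n i k
      else if a = n - 1 \<and> b = 0 then 2 * idE i k
      else if a = n - 1 \<and> b = n - 2 then 2 * cycZ n i k
      else 0)"

definition mckayM :: "nat \<Rightarrow> complex mat" where
  "mckayM n = mat (n * n) (n * n)
     (\<lambda>(p, p'). mckay_block n (p div n) (p' div n) (p mod n) (p' mod n))"

definition stack :: "nat \<Rightarrow> (nat \<Rightarrow> complex vec) \<Rightarrow> complex vec" where
  "stack n xs = vec (n * n) (\<lambda>p. xs (p div n) $ (p mod n))"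

definition vvec :: "nat \<Rightarrow> complex \<Rightarrow> nat \<Rightarrow> complex vec" where
  "vvec n q r = vec n (\<lambda>i. q ^ (2 * i * r))"

definition xblock :: "nat \<Rightarrow> complex \<Rightarrow> nat \<Rightarrow> nat \<Rightarrow> nat \<Rightarrow> complex vec" where
  "xblock n q r j k =
     (let t = q ^ j + inverse (q ^ j); v = vvec n q r in
      if k = 0 then v
      else (q ^ (k * r) * chebU k t) \<cdot>\<^sub>v v +
           (q ^ ((k - 1) * r) *
              (\<Sum>s = 0..(k - 1) div 2. of_nat (k - 2 * s) * chebU (k - 1 - 2 * s) t)) \<cdot>\<^sub>v v)"

definition xvec :: "nat \<Rightarrow> complex \<Rightarrow> nat \<Rightarrow> nat \<Rightarrow> complex vec" where
  "xvec n q r j = stack n (xblock n q r j)"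

definition evec :: "nat \<Rightarrow> complex \<Rightarrow> nat \<Rightarrow> nat \<Rightarrow> complex vec" where
  "evec n q r j = stack n (\<lambda>k. (q ^ (k * r) * chebU k (q ^ j + inverse (q ^ j))) \<cdot>\<^sub>v vvec n q r)"

definition lam :: "complex \<Rightarrow> nat \<Rightarrow> nat \<Rightarrow> complex" where
  "lam q r j = q ^ r * (q ^ j + inverse (q ^ j))"

end

theory Submission
  imports Defs
begin

text \<open>
  Every block of x_{j,r} and v_{j,r} is a multiple of v, and v is an eigenvector of Z with
  eigenvalue q^{2r}. So M acts on such stacked vectors through the n x n matrix obtained from
  its block pattern by replacing I with 1 and Z with q^{2r}, and both claims reduce to scalar
  identities for the coefficient sequences c^k U_k(t) and c^k U_k(t) + c^{k-1} W_k(t), where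
  c = q^r, t = q^j + q^{-j}, and W_k = U_k' is the sum occurring in x_k. The interior rows are
  the Chebyshev recurrence and its derivative, the first row is U_1 = t, and the last row uses
  c^n = 1 together with U_{n-1}(t) = 0 and U_{n-2}(t) = -1, which hold because q^j is an n-th
  root of unity other than 1 and -1.
\<close>

section \<open>Chebyshev polynomials at roots of unity\<close>

lemma chebU_closed_form:
  assumes "x * y = 1"
  shows "(x - y) * chebU k (x + y) = x ^ Suc k - y ^ Suc k"
proof (induction k rule: induct_nat_012)
  case (ge2 k)
  have "(x - y) * chebU (Suc (Suc k)) (x + y)
      = (x + y) * ((x - y) * chebU (Suc k) (x + y)) - x * y * ((x - y) * chebU k (x + y))"
    using assms by (simp add: algebra_simps)
  also have "\<dots> = x ^ Suc (Suc (Suc k)) - y ^ Suc (Suc (Suc k))"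
    unfolding ge2.IH by (simp add: algebra_simps)
  finally show ?case .
qed (use assms in \<open>simp_all add: algebra_simps power2_eq_square\<close>)

lemma chebU_root_of_unity:
  fixes x :: complex
  assumes "x ^ n = 1" and "x\<^sup>2 \<noteq> 1" and "0 < n"
  shows "chebU (n - 1) (x + inverse x) = 0" and "chebU (n - 2) (x + inverse x) = -1"
proof -
  define y where "y = inverse x"
  have "x \<noteq> 0" using assms(1,3) by (metis zero_power zero_neq_one)
  then have xy: "x * y = 1" by (simp add: y_def)
  have "x \<noteq> y"
    using xy assms(2) by (auto simp: power2_eq_square)
  then have x_y: "x - y \<noteq> 0" by simp
  have "n \<noteq> 1"
    using assms(1,2) by auto
  then have "2 \<le> n"
    using \<open>0 < n\<close> by simp
  have yn: "y ^ n = 1" using assms(1) by (simp add: y_def power_inverse)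
  have pow_pred: "z ^ (n - 1) = w" if "z * w = 1" "z ^ n = 1" for z w :: complex
  proof -
    have "z ^ (n - 1) * z = 1" using that(2) \<open>0 < n\<close> by (metis Suc_diff_1 power_Suc2)
    then show ?thesis using that(1) by (metis mult.commute mult.left_neutral mult.assoc)
  qed
  have "(x - y) * chebU (n - 1) (x + y) = 0"
    using chebU_closed_form[OF xy, of "n - 1"] \<open>0 < n\<close> assms(1) yn by simp
  then show "chebU (n - 1) (x + inverse x) = 0" using x_y by (simp add: y_def)
  have "(x - y) * chebU (n - 2) (x + y) = (x - y) * -1"
    using chebU_closed_form[OF xy, of "n - 2"] \<open>2 \<le> n\<close>
      pow_pred[OF xy assms(1)] pow_pred[of y x, OF _ yn] xy
    by (simp add: Suc_diff_Suc mult.commute numeral_2_eq_2)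
  then show "chebU (n - 2) (x + inverse x) = -1"
    using x_y mult_cancel_left unfolding y_def by blast
qed

text \<open>\<open>chebW k\<close> is the derivative of \<open>chebU k\<close>, and \<open>chebW_rec\<close> is the derivative of the Chebyshev recurrence.\<close>

definition chebW :: "nat \<Rightarrow> complex \<Rightarrow> complex" where
  "chebW k t = (\<Sum>s = 0..(k - 1) div 2. of_nat (k - 2 * s) * chebU (k - 1 - 2 * s) t)"

lemma chebW_0 [simp]: "chebW 0 t = 0"
  by (simp add: chebW_def)

lemma chebW_1 [simp]: "chebW (Suc 0) t = 1"
  by (simp add: chebW_def)

lemma chebW_Suc_Suc: "chebW (Suc (Suc k)) t = chebW k t + of_nat (k + 2) * chebU (Suc k) t"
proof (cases k)
  case (Suc m)
  have "chebW (Suc (Suc k)) t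
      = (\<Sum>s = 0..Suc ((k - 1) div 2). of_nat (k + 2 - 2 * s) * chebU (k + 1 - 2 * s) t)"
    unfolding chebW_def using Suc by simp
  also have "\<dots> = of_nat (k + 2) * chebU (Suc k) t
      + (\<Sum>s = 0..(k - 1) div 2. of_nat (k - 2 * s) * chebU (k - 1 - 2 * s) t)"
    by (subst sum.atLeast0_atMost_Suc_shift) simp
  finally show ?thesis by (simp add: chebW_def)
qed (simp add: chebW_def)

lemma chebW_rec: "chebW (Suc (Suc k)) t = t * chebW (Suc k) t - chebW k t + chebU (Suc k) t"
proof (induction k rule: induct_nat_012)
  case (ge2 k)
  define u where "u i = chebU i t" for i
  define w where "w i = chebW i t" for i
  have IH: "w (k + 2) = t * w (k + 1) - w k + u (k + 1)"
    using ge2.IH(1) by (simp add: u_def w_def del: chebU.simps)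
  have step: "w (i + 2) = w i + of_nat (i + 2) * u (i + 1)" for i
    using chebW_Suc_Suc[of i t] by (simp add: u_def w_def del: chebU.simps)
  have u_rec: "u (k + 3) = t * u (k + 2) - u (k + 1)"
    by (simp add: u_def eval_nat_numeral)
  have "w (k + 4) - (t * w (k + 3) - w (k + 2) + u (k + 3))
      = 2 * w (k + 2) - t * w (k + 1) + of_nat (k + 3) * (u (k + 3) - t * u (k + 2))"
    using step[of "k + 2"] step[of "k + 1"] by (simp add: algebra_simps eval_nat_numeral)
  also have "\<dots> = (w (k + 2) - (t * w (k + 1) - w k + u (k + 1)))
      + (w (k + 2) - (w k + of_nat (k + 2) * u (k + 1)))"
    unfolding u_rec by (simp add: algebra_simps)
  also have "\<dots> = 0"
    using IH step[of k] by (simp only: diff_self add_0)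
  finally show ?case
    by (simp add: u_def w_def eval_nat_numeral del: chebU.simps)
qed (simp_all add: chebW_Suc_Suc eval_nat_numeral algebra_simps)

lemma chebW_at_root:
  assumes "chebU (n - 1) t = 0" and "2 \<le> n"
  shows "t * chebW (n - 1) t = 2 * chebW (n - 2) t"
proof -
  obtain m where n: "n = Suc (Suc m)"
    using assms(2) by (metis add_2_eq_Suc le_Suc_ex)
  have "chebU (Suc m) t = 0" using assms(1) n by simp
  then show ?thesis
    using chebW_rec[of m t] chebW_Suc_Suc[of m t] n by simp
qed

section \<open>Stacked multiples of v\<close>

lemma stack_cong: "(\<And>k. k < n \<Longrightarrow> F k = G k) \<Longrightarrow> stack n F = stack n G"
  unfolding stack_def by (intro eq_vecI) (auto simp: less_mult_imp_div_less)

lemma smult_add_scaled_stack: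
  assumes "dim_vec u = n"
  shows "a \<cdot>\<^sub>v stack n (\<lambda>k. f k \<cdot>\<^sub>v u) + stack n (\<lambda>k. g k \<cdot>\<^sub>v u)
       = stack n (\<lambda>k. (a * f k + g k) \<cdot>\<^sub>v u)"
proof (rule eq_vecI)
  fix p assume "p < dim_vec (stack n (\<lambda>k. (a * f k + g k) \<cdot>\<^sub>v u))"
  then have "p < n * n" by (simp add: stack_def)
  then have "p mod n < n" by (cases n) auto
  then show "(a \<cdot>\<^sub>v stack n (\<lambda>k. f k \<cdot>\<^sub>v u) + stack n (\<lambda>k. g k \<cdot>\<^sub>v u)) $ p
      = stack n (\<lambda>k. (a * f k + g k) \<cdot>\<^sub>v u) $ p"
    using \<open>p < n * n\<close> assms by (simp add: stack_def algebra_simps)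
qed (simp add: stack_def)

lemma smult_scaled_stack:
  assumes "dim_vec u = n"
  shows "a \<cdot>\<^sub>v stack n (\<lambda>k. f k \<cdot>\<^sub>v u) = stack n (\<lambda>k. (a * f k) \<cdot>\<^sub>v u)"
proof (rule eq_vecI)
  fix p assume "p < dim_vec (stack n (\<lambda>k. (a * f k) \<cdot>\<^sub>v u))"
  then have "p < n * n" by (simp add: stack_def)
  then have "p mod n < n" by (cases n) auto
  then show "(a \<cdot>\<^sub>v stack n (\<lambda>k. f k \<cdot>\<^sub>v u)) $ p = stack n (\<lambda>k. (a * f k) \<cdot>\<^sub>v u) $ p"
    using \<open>p < n * n\<close> assms by (simp add: stack_def)
qed (simp add: stack_def)

lemma power_exponent_mod:
  assumes "x ^ n = (1 :: 'a :: monoid_mult)"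
  shows "x ^ (m mod n) = x ^ m"
proof -
  have "x ^ m = x ^ (n * (m div n) + m mod n)"
    by simp
  also have "\<dots> = (x ^ n) ^ (m div n) * x ^ (m mod n)"
    by (simp only: power_add power_mult)
  finally show ?thesis
    using assms by simp
qed

lemma power_mult_commuted: "(x :: 'a :: monoid_mult) ^ (k * r) = (x ^ r) ^ k"
  by (simp add: power_mult[symmetric] mult.commute)

lemma dim_vvec [simp]: "dim_vec (vvec n q r) = n"
  by (simp add: vvec_def)

lemma vvec_rotate:
  assumes "q ^ n = 1" and "i < n"
  shows "vvec n q r $ ((i + 1) mod n) = (q ^ r)\<^sup>2 * vvec n q r $ i"
proof -
  have "(2 * ((i + 1) mod n) * r) mod n = (2 * (i + 1) * r) mod n"
    by (metis mod_mult_left_eq mod_mult_right_eq mult.assoc)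
  then have "q ^ (2 * ((i + 1) mod n) * r) = q ^ (2 * (i + 1) * r)"
    by (metis assms(1) power_exponent_mod)
  also have "\<dots> = (q ^ r)\<^sup>2 * q ^ (2 * i * r)"
    unfolding power_mult[symmetric] power_add[symmetric] by (simp add: algebra_simps)
  finally show ?thesis
    using assms(2) by (simp add: vvec_def)
qed

lemma xvec_scaled_stack:
  "xvec n q r j = stack n (\<lambda>k. ((q ^ r) ^ k * chebU k (q ^ j + inverse (q ^ j))
       + (q ^ r) ^ (k - 1) * chebW k (q ^ j + inverse (q ^ j))) \<cdot>\<^sub>v vvec n q r)"
  unfolding xvec_def
proof (rule stack_cong)
  fix k
  show "xblock n q r j k = ((q ^ r) ^ k * chebU k (q ^ j + inverse (q ^ j))
       + (q ^ r) ^ (k - 1) * chebW k (q ^ j + inverse (q ^ j))) \<cdot>\<^sub>v vvec n q r"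
  proof (cases "k = 0")
    case False
    then show ?thesis
      unfolding xblock_def Let_def chebW_def[symmetric] power_mult_commuted
      by (simp add: add_smult_distrib_vec)
  qed (simp add: xblock_def)
qed

lemma evec_scaled_stack:
  "evec n q r j = stack n (\<lambda>k. ((q ^ r) ^ k * chebU k (q ^ j + inverse (q ^ j))) \<cdot>\<^sub>v vvec n q r)"
  unfolding evec_def power_mult_commuted ..

section \<open>The McKay matrix on stacked multiples of v\<close>

lemma sum_idE:
  assumes "i < n"
  shows "(\<Sum>k<n. idE i k * u k) = u i"
proof -
  have "(\<Sum>k<n. idE i k * u k) = (\<Sum>k<n. if k = i then u i else 0)"
    by (rule sum.cong) (auto simp: idE_def)
  then show ?thesis using assms by simp
qed

lemma sum_cycZ:
  assumes "i < n"
  shows "(\<Sum>k<n. cycZ n i k * u k) = u ((i + 1) mod n)"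
proof -
  have "(\<Sum>k<n. cycZ n i k * u k) = (\<Sum>k<n. if k = (i + 1) mod n then u ((i + 1) mod n) else 0)"
    by (rule sum.cong) (auto simp: cycZ_def)
  then show ?thesis using assms by simp
qed

text \<open>The block M_ab with I replaced by 1 and Z by \<open>\<mu>\<close>, its eigenvalue on the vector being stacked.\<close>

definition mckay_symbol :: "nat \<Rightarrow> complex \<Rightarrow> nat \<Rightarrow> nat \<Rightarrow> complex" where
  "mckay_symbol n \<mu> a b =
     (if a \<le> n - 2 \<and> b = a + 1 then 1
      else if 1 \<le> a \<and> a \<le> n - 2 \<and> b + 1 = a then \<mu>
      else if a = n - 1 \<and> b = 0 then 2
      else if a = n - 1 \<and> b = n - 2 then 2 * \<mu>
      else 0)"

lemma mckay_block_apply: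
  assumes "i < n" and "\<And>i. i < n \<Longrightarrow> u $ ((i + 1) mod n) = \<mu> * u $ i"
  shows "(\<Sum>k<n. mckay_block n a b i k * u $ k) = mckay_symbol n \<mu> a b * u $ i"
proof -
  have scaled_idE: "(\<Sum>k<n. c * idE i k * u $ k) = c * u $ i" for c
    using sum_idE[OF assms(1), of "\<lambda>k. u $ k"] by (simp add: mult.assoc sum_distrib_left[symmetric])
  have scaled_cycZ: "(\<Sum>k<n. c * cycZ n i k * u $ k) = c * \<mu> * u $ i" for c
    using sum_cycZ[OF assms(1), of "\<lambda>k. u $ k"] assms by (simp add: mult.assoc sum_distrib_left[symmetric])
  have pull_if: "(\<Sum>k<n. (if P then f k else g k) * u $ k)
      = (if P then \<Sum>k<n. f k * u $ k else \<Sum>k<n. g k * u $ k)" for P and f g :: "nat \<Rightarrow> complex"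
    by simp
  have if_mult: "(if P then x else y) * z = (if P then x * z else y * z)" for P and x y z :: complex
    by simp
  show ?thesis
    unfolding mckay_block_def pull_if unfolding mckay_symbol_def if_mult
    by (simp only: sum_idE[OF assms(1), of "\<lambda>k. u $ k"] scaled_idE scaled_cycZ[of 1, simplified] scaled_cycZ mult_zero_left
        sum.neutral_const mult_1_left)
qed

lemma sum_lessThan_square_div_mod:
  fixes f :: "nat \<Rightarrow> nat \<Rightarrow> 'a::comm_monoid_add"
  shows "(\<Sum>p<n * n. f (p div n) (p mod n)) = (\<Sum>b<n. \<Sum>k<n. f b k)"
proof -
  have "(\<Sum>p<n * n. f (p div n) (p mod n)) = (\<Sum>b<n. \<Sum>p\<in>{b * n..<b * n + n}. f (p div n) (p mod n))"
    by (rule sum.nat_group[symmetric])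
  also have "\<dots> = (\<Sum>b<n. \<Sum>k<n. f b k)"
  proof (rule sum.cong[OF refl])
    fix b
    have "(\<Sum>p\<in>{b * n..<b * n + n}. f (p div n) (p mod n)) = (\<Sum>p\<in>{0 + b * n..<n + b * n}. f (p div n) (p mod n))"
      by (simp add: add.commute)
    also have "\<dots> = (\<Sum>k\<in>{0..<n}. f ((k + b * n) div n) ((k + b * n) mod n))"
      by (rule sum.shift_bounds_nat_ivl)
    also have "\<dots> = (\<Sum>k<n. f b k)"
      by (rule sum.cong) auto
    finally show "(\<Sum>p\<in>{b * n..<b * n + n}. f (p div n) (p mod n)) = (\<Sum>k<n. f b k)" .
  qed
  finally show ?thesis .
qed

lemma mckayM_mult_scaled_stack:
  assumes u: "dim_vec u = n" and Zu: "\<And>i. i < n \<Longrightarrow> u $ ((i + 1) mod n) = \<mu> * u $ i"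
  shows "mckayM n *\<^sub>v stack n (\<lambda>b. \<alpha> b \<cdot>\<^sub>v u)
       = stack n (\<lambda>a. (\<Sum>b<n. mckay_symbol n \<mu> a b * \<alpha> b) \<cdot>\<^sub>v u)"
proof (rule eq_vecI)
  fix p assume "p < dim_vec (stack n (\<lambda>a. (\<Sum>b<n. mckay_symbol n \<mu> a b * \<alpha> b) \<cdot>\<^sub>v u))"
  then have p: "p < n * n" by (simp add: stack_def)
  then have "0 < n" by (cases n) auto
  then have i: "p mod n < n" by simp
  have "(mckayM n *\<^sub>v stack n (\<lambda>b. \<alpha> b \<cdot>\<^sub>v u)) $ p
      = (\<Sum>p'<n * n. mckay_block n (p div n) (p' div n) (p mod n) (p' mod n) * (\<alpha> (p' div n) * u $ (p' mod n)))"
    using p i u by (simp add: mckayM_def stack_def scalar_prod_def atLeast0LessThan)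
  also have "\<dots> = (\<Sum>b<n. \<Sum>k<n. mckay_block n (p div n) b (p mod n) k * (\<alpha> b * u $ k))"
    by (rule sum_lessThan_square_div_mod)
  also have "\<dots> = (\<Sum>b<n. \<alpha> b * (\<Sum>k<n. mckay_block n (p div n) b (p mod n) k * u $ k))"
    by (simp add: sum_distrib_left algebra_simps)
  also have "\<dots> = (\<Sum>b<n. mckay_symbol n \<mu> (p div n) b * \<alpha> b) * u $ (p mod n)"
    using mckay_block_apply[OF i Zu] by (simp add: sum_distrib_left sum_distrib_right algebra_simps)
  also have "\<dots> = stack n (\<lambda>a. (\<Sum>b<n. mckay_symbol n \<mu> a b * \<alpha> b) \<cdot>\<^sub>v u) $ p"
    using p i u by (simp add: stack_def)
  finally show "(mckayM n *\<^sub>v stack n (\<lambda>b. \<alpha> b \<cdot>\<^sub>v u)) $ p = \<dots>" .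
qed (simp add: mckayM_def stack_def)

lemma mckay_symbol_sum:
  assumes "3 \<le> n" and "a < n"
  shows "(\<Sum>b<n. mckay_symbol n \<mu> a b * \<alpha> b) =
     (if a = n - 1 then 2 * \<alpha> 0 + 2 * \<mu> * \<alpha> (n - 2)
      else \<alpha> (a + 1) + (if a = 0 then 0 else \<mu> * \<alpha> (a - 1)))"
proof -
  consider "a = n - 1" | "a = 0" | "0 < a" "a < n - 1"
    using assms by linarith
  then show ?thesis
  proof cases
    case 1
    then have eq: "(\<lambda>b. mckay_symbol n \<mu> a b * \<alpha> b)
        = (\<lambda>b. (if b = 0 then 2 * \<alpha> b else 0) + (if b = n - 2 then 2 * \<mu> * \<alpha> b else 0))"
      using assms by (auto simp: mckay_symbol_def fun_eq_iff)
    show ?thesis unfolding eq using 1 assms by (simp add: sum.distrib)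
  next
    case 2
    then have eq: "(\<lambda>b. mckay_symbol n \<mu> a b * \<alpha> b) = (\<lambda>b. if b = 1 then \<alpha> b else 0)"
      using assms by (auto simp: mckay_symbol_def fun_eq_iff)
    show ?thesis unfolding eq using 2 assms by simp
  next
    case 3
    then have eq: "(\<lambda>b. mckay_symbol n \<mu> a b * \<alpha> b)
        = (\<lambda>b. (if b = a + 1 then \<alpha> b else 0) + (if b = a - 1 then \<mu> * \<alpha> b else 0))"
      using assms by (auto simp: mckay_symbol_def fun_eq_iff)
    show ?thesis unfolding eq using 3 assms by (auto simp: sum.distrib)
  qed
qed

lemma mckay_symbol_sum_chebU:
  assumes "3 \<le> n" and "c ^ n = 1" and "chebU (n - 1) t = 0" and "chebU (n - 2) t = -1"
    and "a < n"
  shows "(\<Sum>b<n. mckay_symbol n (c\<^sup>2) a b * (c ^ b * chebU b t)) = c * t * (c ^ a * chebU a t)"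
proof -
  consider "a = n - 1" | "a = 0" | b where "a = Suc b" "a < n - 1"
    using assms(5) by (cases a; cases "a = n - 1") auto
  then show ?thesis
  proof cases
    case 1
    have "2 + (n - 2) = n"
      using assms(1) by simp
    then have "c\<^sup>2 * c ^ (n - 2) = 1"
      using assms(2) by (simp only: power_add[symmetric])
    then show ?thesis
      unfolding mckay_symbol_sum[OF assms(1,5)] using 1 assms(3,4) by (simp add: algebra_simps)
  next
    case 2
    then show ?thesis
      unfolding mckay_symbol_sum[OF assms(1,5)] using assms(1) by simp
  next
    case 3
    then show ?thesis
      unfolding mckay_symbol_sum[OF assms(1,5)] by (simp add: power2_eq_square algebra_simps)
  qed
qed

lemma mckay_symbol_sum_chebW:
  assumes "3 \<le> n" and "c ^ n = 1" and "chebU (n - 1) t = 0" and "chebU (n - 2) t = -1"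
    and "a < n"
  shows "(\<Sum>b<n. mckay_symbol n (c\<^sup>2) a b * (c ^ b * chebU b t + c ^ (b - 1) * chebW b t))
       = c * t * (c ^ a * chebU a t + c ^ (a - 1) * chebW a t) + c ^ a * chebU a t"
proof -
  consider "a = n - 1" | "a = 0" | b where "a = Suc b" "a < n - 1"
    using assms(5) by (cases a; cases "a = n - 1") auto
  then show ?thesis
  proof cases
    case 1
    obtain m where n: "n = m + 3"
      using assms(1) by (metis add.commute le_Suc_ex)
    have W: "t * chebW (m + 2) t = 2 * chebW (m + 1) t"
      using chebW_at_root[OF assms(3)] n by simp
    have U: "chebU (m + 1) t = -1" "chebU (m + 2) t = 0"
      using assms(3,4) n by simp_all
    have c: "c\<^sup>2 * c ^ (m + 1) = 1" "c\<^sup>2 * c ^ m = c ^ (m + 2)"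
      using assms(2) unfolding n power_add[symmetric] by (simp_all add: eval_nat_numeral)
    have "(\<Sum>b<n. mckay_symbol n (c\<^sup>2) a b * (c ^ b * chebU b t + c ^ (b - 1) * chebW b t))
        = 2 + 2 * c\<^sup>2 * (c ^ (m + 1) * chebU (m + 1) t + c ^ m * chebW (m + 1) t)"
      unfolding mckay_symbol_sum[OF assms(1,5)] using 1 n by simp
    also have "\<dots> = 2 - 2 * (c\<^sup>2 * c ^ (m + 1)) + 2 * (c\<^sup>2 * c ^ m) * chebW (m + 1) t"
      using U by (simp add: algebra_simps)
    also have "\<dots> = c ^ (m + 2) * (t * chebW (m + 2) t)"
      unfolding c W by simp
    also have "\<dots> = c * t * (c ^ a * chebU a t + c ^ (a - 1) * chebW a t) + c ^ a * chebU a t"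
      using 1 n U by (simp add: algebra_simps eval_nat_numeral)
    finally show ?thesis .
  next
    case 2
    then show ?thesis
      unfolding mckay_symbol_sum[OF assms(1,5)] using assms(1) by simp
  next
    case 3
    have c: "c\<^sup>2 * c ^ b = c ^ (b + 2)" "c\<^sup>2 * c ^ (b - 1) * chebW b t = c ^ (b + 1) * chebW b t"
      by (simp only: power_add mult.commute) (cases b, simp_all add: power2_eq_square)
    have U: "chebU (b + 2) t = t * chebU (b + 1) t - chebU b t"
      by (simp add: eval_nat_numeral)
    have W: "chebW (b + 2) t = t * chebW (b + 1) t - chebW b t + chebU (b + 1) t"
      using chebW_rec[of b t] by (simp add: eval_nat_numeral del: chebU.simps)
    have "(\<Sum>b<n. mckay_symbol n (c\<^sup>2) a b * (c ^ b * chebU b t + c ^ (b - 1) * chebW b t))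
        = c ^ (b + 2) * chebU (b + 2) t + c ^ (b + 1) * chebW (b + 2) t
          + (c\<^sup>2 * c ^ b * chebU b t + c\<^sup>2 * c ^ (b - 1) * chebW b t)"
      unfolding mckay_symbol_sum[OF assms(1,5)] using 3 by (simp add: algebra_simps del: chebU.simps)
    also have "\<dots> = c ^ (b + 2) * (chebU (b + 2) t + chebU b t) + c ^ (b + 1) * (chebW (b + 2) t + chebW b t)"
      unfolding c by (simp add: algebra_simps)
    also have "\<dots> = c * t * (c ^ a * chebU a t + c ^ (a - 1) * chebW a t) + c ^ a * chebU a t"
      unfolding U W using 3 by (simp add: algebra_simps del: chebU.simps)
    finally show ?thesis .
  qed
qed

lemma mckayM_mult_chebU_stack:
  assumes "3 \<le> n" and "q ^ n = 1" and "chebU (n - 1) t = 0" and "chebU (n - 2) t = -1"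
  shows "mckayM n *\<^sub>v stack n (\<lambda>k. ((q ^ r) ^ k * chebU k t) \<cdot>\<^sub>v vvec n q r)
       = (q ^ r * t) \<cdot>\<^sub>v stack n (\<lambda>k. ((q ^ r) ^ k * chebU k t) \<cdot>\<^sub>v vvec n q r)"
proof -
  have cn: "(q ^ r) ^ n = 1"
    using assms(2) by (simp add: power_mult_commuted[symmetric] power_mult)
  have "mckayM n *\<^sub>v stack n (\<lambda>k. ((q ^ r) ^ k * chebU k t) \<cdot>\<^sub>v vvec n q r)
      = stack n (\<lambda>a. (\<Sum>b<n. mckay_symbol n ((q ^ r)\<^sup>2) a b * ((q ^ r) ^ b * chebU b t)) \<cdot>\<^sub>v vvec n q r)"
    by (rule mckayM_mult_scaled_stack[OF dim_vvec vvec_rotate[OF assms(2)]])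
  also have "\<dots> = stack n (\<lambda>k. (q ^ r * t * ((q ^ r) ^ k * chebU k t)) \<cdot>\<^sub>v vvec n q r)"
    by (rule stack_cong) (simp only: mckay_symbol_sum_chebU[OF assms(1) cn assms(3,4)])
  also have "\<dots> = (q ^ r * t) \<cdot>\<^sub>v stack n (\<lambda>k. ((q ^ r) ^ k * chebU k t) \<cdot>\<^sub>v vvec n q r)"
    by (rule smult_scaled_stack[OF dim_vvec, symmetric])
  finally show ?thesis .
qed

lemma mckayM_mult_chebW_stack:
  assumes "3 \<le> n" and "q ^ n = 1" and "chebU (n - 1) t = 0" and "chebU (n - 2) t = -1"
  shows "mckayM n *\<^sub>v stack n (\<lambda>k. ((q ^ r) ^ k * chebU k t + (q ^ r) ^ (k - 1) * chebW k t) \<cdot>\<^sub>v vvec n q r)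
       = (q ^ r * t) \<cdot>\<^sub>v stack n (\<lambda>k. ((q ^ r) ^ k * chebU k t + (q ^ r) ^ (k - 1) * chebW k t) \<cdot>\<^sub>v vvec n q r)
         + stack n (\<lambda>k. ((q ^ r) ^ k * chebU k t) \<cdot>\<^sub>v vvec n q r)"
proof -
  have cn: "(q ^ r) ^ n = 1"
    using assms(2) by (simp add: power_mult_commuted[symmetric] power_mult)
  have "mckayM n *\<^sub>v stack n (\<lambda>k. ((q ^ r) ^ k * chebU k t + (q ^ r) ^ (k - 1) * chebW k t) \<cdot>\<^sub>v vvec n q r)
      = stack n (\<lambda>a. (\<Sum>b<n. mckay_symbol n ((q ^ r)\<^sup>2) a b
          * ((q ^ r) ^ b * chebU b t + (q ^ r) ^ (b - 1) * chebW b t)) \<cdot>\<^sub>v vvec n q r)"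
    by (rule mckayM_mult_scaled_stack[OF dim_vvec vvec_rotate[OF assms(2)]])
  also have "\<dots> = stack n (\<lambda>k. (q ^ r * t * ((q ^ r) ^ k * chebU k t + (q ^ r) ^ (k - 1) * chebW k t)
      + (q ^ r) ^ k * chebU k t) \<cdot>\<^sub>v vvec n q r)"
    by (rule stack_cong) (simp only: mckay_symbol_sum_chebW[OF assms(1) cn assms(3,4)])
  also have "\<dots> = (q ^ r * t) \<cdot>\<^sub>v stack n (\<lambda>k. ((q ^ r) ^ k * chebU k t + (q ^ r) ^ (k - 1) * chebW k t)
        \<cdot>\<^sub>v vvec n q r) + stack n (\<lambda>k. ((q ^ r) ^ k * chebU k t) \<cdot>\<^sub>v vvec n q r)"
    by (rule smult_add_scaled_stack[OF dim_vvec, symmetric])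
  finally show ?thesis .
qed

lemma evec_nonzero:
  assumes "0 < n"
  shows "evec n q r j \<noteq> 0\<^sub>v (n * n)"
proof -
  have "evec n q r j $ 0 = 1"
    using assms by (simp add: evec_def stack_def vvec_def)
  then show ?thesis
    using assms by auto
qed

theorem mainTheorem13:
  fixes n r j :: nat and q :: complex
  assumes "n \<ge> 3" and "odd n" and "prim_root_unity n q"
    and "r < n" and "1 \<le> j" and "j \<le> (n - 1) div 2"
  shows "mckayM n *\<^sub>v xvec n q r j = lam q r j \<cdot>\<^sub>v xvec n q r j + evec n q r j
         \<and> eigenvector (mckayM n) (evec n q r j) (lam q r j)"
proof -
  have qn: "q ^ n = 1"
    using assms(3) by (simp add: prim_root_unity_def)
  have "(q ^ j) ^ n = 1"
    using qn by (simp add: power_mult_commuted[symmetric] power_mult)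
  moreover have "(q ^ j)\<^sup>2 \<noteq> 1"
    using assms(3,5,6) unfolding prim_root_unity_def power_mult[symmetric] by auto
  ultimately have U: "chebU (n - 1) (q ^ j + inverse (q ^ j)) = 0"
      "chebU (n - 2) (q ^ j + inverse (q ^ j)) = -1"
    using assms(1) chebU_root_of_unity by auto
  have lam: "lam q r j = q ^ r * (q ^ j + inverse (q ^ j))"
    by (simp add: lam_def)
  have "mckayM n *\<^sub>v xvec n q r j = lam q r j \<cdot>\<^sub>v xvec n q r j + evec n q r j"
    unfolding xvec_scaled_stack evec_scaled_stack lam by (rule mckayM_mult_chebW_stack[OF assms(1) qn U])
  moreover have "mckayM n *\<^sub>v evec n q r j = lam q r j \<cdot>\<^sub>v evec n q r j"
    unfolding evec_scaled_stack lam by (rule mckayM_mult_chebU_stack[OF assms(1) qn U])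
  moreover have "evec n q r j \<in> carrier_vec (dim_row (mckayM n))"
    by (simp add: mckayM_def evec_def stack_def)
  ultimately show ?thesis
    using evec_nonzero[of n q r j] assms(1) by (simp add: eigenvector_def mckayM_def)
qed

end
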